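(* Let $\mathcal{A}$ be a complex unital algebra which is the direct sum $\mathcal{A}=\bigoplus_{i=1}^\infty\mathcal{A}_i$ of unital subalgebras $\mathcal{A}_i$ with units $I_i$. If $\phi:\mathcal{A}\to\mathcal{A}$ is a linear mapping such that $\phi(A)\circ B+A\circ\phi(B)=0$ for all $A,B\in\mathcal{A}$ with $AB=BA=0$, then $\phi(\mathcal{A}_i)\subseteq\mathcal{A}_i$ for every $i$.
   Context: "Direct sum" here means: every element of $\mathcal{A}$ is uniquely written as $A=\bigoplus_i A_i$ with $A_i\in\mathcal{A}_i$, every family $(A_i)$ with $A_i\in\mathcal{A}_i$ determines an element, operations are componentwise (so $\mathcal{A}_i\mathcal{A}_j=0$ for $i\ne j$), $\mathcal{A}_i$ is identified with the elements supported in the $i$-th coordinate, and the unit is $I=\bigoplus_i I_i$. $X\circ Y=XY+YX$. *)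

theory Defs
  imports Complex_Main
begin

definition complex_algebra :: "(complex \<Rightarrow> 'a::{ring,monoid_mult} \<Rightarrow> 'a) \<Rightarrow> bool" where
  "complex_algebra sm \<longleftrightarrow>
     (\<forall>c x y. sm c (x + y) = sm c x + sm c y) \<and>
     (\<forall>c d x. sm (c + d) x = sm c x + sm d x) \<and>
     (\<forall>c d x. sm c (sm d x) = sm (c * d) x) \<and>
     (\<forall>x. sm 1 x = x) \<and>
     (\<forall>c x y. sm c (x * y) = sm c x * y \<and> sm c (x * y) = x * sm c y)"

text \<open>B is a unital subalgebra (with its own unit u, possibly different from 1).\<close>
definition unital_subalgebra ::
  "(complex \<Rightarrow> 'a::{ring,monoid_mult} \<Rightarrow> 'a) \<Rightarrow> 'a set \<Rightarrow> 'a \<Rightarrow> bool" where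
  "unital_subalgebra sm B u \<longleftrightarrow>
     0 \<in> B \<and>
     (\<forall>x\<in>B. \<forall>y\<in>B. x + y \<in> B \<and> x * y \<in> B) \<and>
     (\<forall>c. \<forall>x\<in>B. sm c x \<in> B) \<and>
     u \<in> B \<and> (\<forall>x\<in>B. u * x = x \<and> x * u = x)"

text \<open>The algebra is the direct sum of the subalgebras Ai i (i :: nat) with units I i,
  in the sense of the context: there is a bijection Phi onto the set of all families
  (A_i) with A_i in Ai i, operations are componentwise, Ai i is identified with the
  elements supported in the i-th coordinate, and the unit is the family of the I i.\<close>
definition is_direct_sum ::
  "(complex \<Rightarrow> 'a::{ring,monoid_mult} \<Rightarrow> 'a) \<Rightarrow> (nat \<Rightarrow> 'a set) \<Rightarrow> (nat \<Rightarrow> 'a) \<Rightarrow> bool" where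
  "is_direct_sum sm Ai I \<longleftrightarrow>
     (\<exists>Phi :: 'a \<Rightarrow> nat \<Rightarrow> 'a.
        bij_betw Phi UNIV {f. \<forall>i. f i \<in> Ai i} \<and>
        (\<forall>x y i. Phi (x + y) i = Phi x i + Phi y i) \<and>
        (\<forall>x y i. Phi (x * y) i = Phi x i * Phi y i) \<and>
        (\<forall>c x i. Phi (sm c x) i = sm c (Phi x i)) \<and>
        (\<forall>i x. x \<in> Ai i \<longleftrightarrow> Phi x = (\<lambda>j. if j = i then x else 0)) \<and>
        (\<forall>i. Phi 1 i = I i))"

definition complex_linear ::
  "(complex \<Rightarrow> 'a::{ring,monoid_mult} \<Rightarrow> 'a) \<Rightarrow> ('a \<Rightarrow> 'a) \<Rightarrow> bool" where
  "complex_linear sm f \<longleftrightarrow>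
     (\<forall>x y. f (x + y) = f x + f y) \<and> (\<forall>c x. f (sm c x) = sm c (f x))"

definition jordan_prod :: "'a::{ring,monoid_mult} \<Rightarrow> 'a \<Rightarrow> 'a" (infixl "\<circ>\<^sub>J" 70) where
  "x \<circ>\<^sub>J y = x * y + y * x"

end

theory Submission
  imports Defs
begin

text \<open>For j \<noteq> i, every A in the i-th summand is orthogonal to the unit I j, so the hypothesis
  gives \<phi>(A) \<circ> I j + A \<circ> \<phi>(I j) = 0. In the j-th coordinate the second term vanishes and the
  first is twice the j-th coordinate of \<phi>(A); since 2 is invertible in a complex algebra, that
  coordinate is 0. Hence \<phi>(A) is supported in the i-th coordinate, i.e. lies in the i-th
  summand.\<close>

lemma complex_algebra_double_eq_zero:
  fixes sm :: "complex \<Rightarrow> 'a::{ring,monoid_mult} \<Rightarrow> 'a" and p :: 'a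
  assumes "complex_algebra sm" and "p + p = 0"
  shows "p = 0"
proof -
  have add: "\<And>c x y. sm c (x + y) = sm c x + sm c y"
    and add_scalar: "\<And>c d x. sm (c + d) x = sm c x + sm d x"
    and one: "\<And>x. sm 1 x = x"
    using assms(1) unfolding complex_algebra_def by auto
  have zero: "sm (1/2) 0 = 0"
    using add[of "1/2" 0 0] by simp
  have "p = sm (1/2 + 1/2) p" using one by simp
  also have "\<dots> = sm (1/2) (p + p)" by (simp only: add_scalar add)
  finally show "p = 0" using assms(2) zero by simp
qed

locale direct_sum_coordinates =
  fixes Phi :: "'a::ring \<Rightarrow> nat \<Rightarrow> 'a" and Ai :: "nat \<Rightarrow> 'a set"
  assumes bij: "bij_betw Phi UNIV {f. \<forall>i. f i \<in> Ai i}"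
    and coord_add: "\<And>x y i. Phi (x + y) i = Phi x i + Phi y i"
    and coord_mult: "\<And>x y i. Phi (x * y) i = Phi x i * Phi y i"
    and mem_component_iff: "\<And>i x. x \<in> Ai i \<longleftrightarrow> Phi x = (\<lambda>j. if j = i then x else 0)"
begin

lemma coord_in_component: "Phi x i \<in> Ai i"
  using bij unfolding bij_betw_def by blast

lemma coord_eq_iff: "Phi x = Phi y \<longleftrightarrow> x = y"
  using bij unfolding bij_betw_def inj_def by blast

lemma coord_zero [simp]: "Phi 0 i = 0"
  using coord_add[of 0 0 i] by simp

lemma coord_of_component:
  "x \<in> Ai i \<Longrightarrow> Phi x j = (if j = i then x else 0)"
  using mem_component_iff by simp

lemma mem_component_if_coords_vanish:
  assumes "\<And>j. j \<noteq> i \<Longrightarrow> Phi x j = 0"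
  shows "x \<in> Ai i"
proof -
  have "Phi (Phi x i) = Phi x"
    using coord_of_component[OF coord_in_component] assms by fastforce
  then have "Phi x i = x" by (simp add: coord_eq_iff)
  then show ?thesis using coord_in_component by metis
qed

lemma components_orthogonal:
  assumes "x \<in> Ai i" "y \<in> Ai j" "i \<noteq> j"
  shows "x * y = 0"
proof -
  have "Phi (x * y) = Phi 0"
    using assms by (auto simp: coord_mult coord_of_component)
  then show ?thesis by (simp add: coord_eq_iff)
qed

end

theorem lemma2p12:
  fixes sm :: "complex \<Rightarrow> 'a::{ring,monoid_mult} \<Rightarrow> 'a"
    and Ai :: "nat \<Rightarrow> 'a set" and I :: "nat \<Rightarrow> 'a" and \<phi> :: "'a \<Rightarrow> 'a"
  assumes "complex_algebra sm"
    and "\<And>i. unital_subalgebra sm (Ai i) (I i)"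
    and "is_direct_sum sm Ai I"
    and "complex_linear sm \<phi>"
    and "\<And>A B. A * B = 0 \<Longrightarrow> B * A = 0 \<Longrightarrow> (\<phi> A) \<circ>\<^sub>J B + A \<circ>\<^sub>J (\<phi> B) = 0"
  shows "\<forall>i. \<phi> ` (Ai i) \<subseteq> Ai i"
proof -
  obtain Phi where "direct_sum_coordinates Phi Ai"
    using assms(3) unfolding is_direct_sum_def direct_sum_coordinates_def by blast
  then interpret direct_sum_coordinates Phi Ai .
  have unit_in: "I j \<in> Ai j" and unit: "\<And>x. x \<in> Ai j \<Longrightarrow> I j * x = x \<and> x * I j = x" for j
    using assms(2) unfolding unital_subalgebra_def by auto
  show ?thesis
  proof (intro allI image_subsetI mem_component_if_coords_vanish)
    fix i j A assume A: "A \<in> Ai i" and "j \<noteq> i"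
    then have "\<phi> A \<circ>\<^sub>J I j + A \<circ>\<^sub>J \<phi> (I j) = 0"
      using assms(5) components_orthogonal unit_in by metis
    then have "Phi (\<phi> A \<circ>\<^sub>J I j + A \<circ>\<^sub>J \<phi> (I j)) j = 0"
      by simp
    then have "Phi (\<phi> A) j * I j + I j * Phi (\<phi> A) j = 0"
      using A \<open>j \<noteq> i\<close>
      by (simp add: jordan_prod_def coord_add coord_mult coord_of_component
          coord_of_component[OF unit_in])
    then have "Phi (\<phi> A) j + Phi (\<phi> A) j = 0"
      using unit[OF coord_in_component] by simp
    then show "Phi (\<phi> A) j = 0"
      using complex_algebra_double_eq_zero[OF assms(1)] by blast
  qed
qed

end
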